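(* Let $V$ be a finite dimensional real vector space, let $S$ be a commutative subsemigroup of $GL(V)$ and let $G$ be its Zariski closure in $GL(V)$. Suppose that the orbit $Sx=\{sx: s\in S\}$ of some $x\in V$ is somewhere dense in $V$ (its closure contains a non-empty open subset of $V$). Then the map $G\to Gx$, $g\mapsto gx$, is a diffeomorphism of $G$ onto an open subset of $V$. In particular, $S$ is somewhere dense in $G$ (its closure in $G$ contains a non-empty open subset of $G$). *)

theory Defs
  imports "HOL-Analysis.Analysis"
begin

inductive_set matrix_poly_fun :: "(real^'n^'n \<Rightarrow> real) set" where
  const: "(\<lambda>A. c) \<in> matrix_poly_fun"
| entry: "(\<lambda>A. A $ i $ j) \<in> matrix_poly_fun"
| add: "p \<in> matrix_poly_fun \<Longrightarrow> q \<in> matrix_poly_fun \<Longrightarrow> (\<lambda>A. p A + q A) \<in> matrix_poly_fun"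
| mult: "p \<in> matrix_poly_fun \<Longrightarrow> q \<in> matrix_poly_fun \<Longrightarrow> (\<lambda>A. p A * q A) \<in> matrix_poly_fun"

definition zariski_closure_GL :: "(real^'n^'n) set \<Rightarrow> (real^'n^'n) set" where
  "zariski_closure_GL S = {A. invertible A \<and>
     (\<forall>p \<in> matrix_poly_fun. (\<forall>s\<in>S. p s = 0) \<longrightarrow> p A = 0)}"

fun Ck_on :: "nat \<Rightarrow> 'a::euclidean_space set \<Rightarrow> ('a \<Rightarrow> 'b::real_normed_vector) \<Rightarrow> bool" where
  "Ck_on 0 U f = continuous_on U f"
| "Ck_on (Suc k) U f = (\<exists>f'. (\<forall>x\<in>U. (f has_derivative f' x) (at x)) \<and>
                              (\<forall>v. Ck_on k U (\<lambda>x. f' x v)))"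

definition c_infinity_on :: "'a::euclidean_space set \<Rightarrow> ('a \<Rightarrow> 'b::real_normed_vector) \<Rightarrow> bool" where
  "c_infinity_on U f \<longleftrightarrow> (\<forall>k. Ck_on k U f)"

end

theory Submission
  imports Defs "HOL-Computational_Algebra.Polynomial"
begin

text \<open>Write \<open>L g = g x\<close>. Every \<open>a\<close> in the linear span of \<open>S\<close> commutes with \<open>S\<close>, so \<open>a x = 0\<close> forces
  \<open>a\<close> to vanish on the orbit \<open>Sx\<close>, which spans \<open>V\<close> because its closure has interior; hence
  \<open>L\<close> is a linear isomorphism from \<open>span S\<close> onto \<open>V\<close>. Pulling back the interior of
  \<open>closure (Sx)\<close> along \<open>L\<^sup>-\<^sup>1\<close> shows that \<open>closure S\<close> contains an open piece of \<open>span S\<close>, so a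
  polynomial vanishing on \<open>S\<close> vanishes on all of \<open>span S\<close>. Therefore \<open>G = span S \<inter> GL(V)\<close>, and \<open>L\<close>
  maps it onto the open set \<open>L\<^sup>-\<^sup>1 -` GL(V)\<close> with a linear, hence smooth, inverse.\<close>

lemma matrix_poly_fun_sum:
  "finite I \<Longrightarrow> (\<forall>i\<in>I. f i \<in> matrix_poly_fun) \<Longrightarrow> (\<lambda>A. \<Sum>i\<in>I. f i A) \<in> matrix_poly_fun"
proof (induction I rule: finite_induct)
  case empty
  then show ?case using matrix_poly_fun.const[of 0] by simp
next
  case (insert a F)
  then show ?case using matrix_poly_fun.add[of "f a" "\<lambda>A. \<Sum>i\<in>F. f i A"] by simp
qed

lemma matrix_poly_fun_prod:
  "finite I \<Longrightarrow> (\<forall>i\<in>I. f i \<in> matrix_poly_fun) \<Longrightarrow> (\<lambda>A. \<Prod>i\<in>I. f i A) \<in> matrix_poly_fun"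
proof (induction I rule: finite_induct)
  case empty
  then show ?case using matrix_poly_fun.const[of 1] by simp
next
  case (insert a F)
  then show ?case using matrix_poly_fun.mult[of "f a" "\<lambda>A. \<Prod>i\<in>F. f i A"] by simp
qed

lemma matrix_poly_fun_det: "(det :: real^'n^'n \<Rightarrow> real) \<in> matrix_poly_fun"
proof -
  have "(\<lambda>A::real^'n^'n. \<Sum>p\<in>{p. p permutes UNIV}. of_int (sign p) * (\<Prod>i\<in>UNIV. A $ i $ p i))
          \<in> matrix_poly_fun"
    by (intro matrix_poly_fun_sum matrix_poly_fun_prod ballI matrix_poly_fun.mult
          matrix_poly_fun.const matrix_poly_fun.entry finite_permutations finite)
  then show ?thesis unfolding det_def[abs_def] .
qed

lemma matrix_poly_fun_inner: "(\<lambda>M::real^'n^'n. M \<bullet> z) \<in> matrix_poly_fun"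
proof -
  have "(\<lambda>M::real^'n^'n. \<Sum>i\<in>UNIV. \<Sum>j\<in>UNIV. M $ i $ j * z $ i $ j) \<in> matrix_poly_fun"
    by (intro matrix_poly_fun_sum matrix_poly_fun.mult matrix_poly_fun.entry
          matrix_poly_fun.const ballI finite)
  then show ?thesis by (simp add: inner_vec_def)
qed

lemma continuous_on_matrix_poly_fun: "p \<in> matrix_poly_fun \<Longrightarrow> continuous_on UNIV p"
  by (induction rule: matrix_poly_fun.induct) (simp_all add: continuous_intros)

lemma matrix_poly_fun_on_line:
  "p \<in> matrix_poly_fun \<Longrightarrow> \<exists>P. \<forall>t. p (M + t *\<^sub>R N) = poly P t"
proof (induction rule: matrix_poly_fun.induct)
  case (const c)
  then show ?case by (intro exI[of _ "[:c:]"]) simp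
next
  case (entry i j)
  then show ?case by (intro exI[of _ "[:M $ i $ j, N $ i $ j:]"]) (simp add: algebra_simps)
next
  case (add p q)
  then show ?case by (metis poly_add)
next
  case (mult p q)
  then show ?case by (metis poly_mult)
qed

lemma open_invertible_matrices: "open {A::real^'n^'n. invertible A}"
proof -
  have "{A::real^'n^'n. invertible A} = det -` (UNIV - {0})"
    by (auto simp: invertible_det_nz)
  then show ?thesis
    using continuous_on_matrix_poly_fun[OF matrix_poly_fun_det]
    by (auto intro!: open_vimage)
qed

text \<open>On the line through \<open>y\<^sub>0\<close> and \<open>y\<close>, \<open>p \<circ> \<phi>\<close> is a univariate polynomial with infinitely many
  roots near \<open>y\<^sub>0\<close>.\<close>
lemma matrix_poly_fun_vanishing_on_linear_image:
  fixes \<phi> :: "'a::real_normed_vector \<Rightarrow> real^'n^'n"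
  assumes p: "p \<in> matrix_poly_fun" and lin: "linear \<phi>" and "open W" "W \<noteq> {}"
    and zero: "\<forall>y\<in>W. p (\<phi> y) = 0"
  shows "p (\<phi> y) = 0"
proof -
  obtain y0 r where "r > 0" and ball: "ball y0 r \<subseteq> W"
    using \<open>open W\<close> \<open>W \<noteq> {}\<close> open_contains_ball by blast
  obtain P where P: "\<forall>t. p (\<phi> y0 + t *\<^sub>R (\<phi> y - \<phi> y0)) = poly P t"
    using matrix_poly_fun_on_line[OF p] by blast
  define \<delta> where "\<delta> = r / (norm (y - y0) + 1)"
  have norm_pos: "norm (y - y0) + 1 > 0" by (simp add: add_nonneg_pos)
  then have "\<delta> > 0" unfolding \<delta>_def using \<open>r > 0\<close> by simp
  have "poly P t = 0" if t: "t \<in> {0<..<\<delta>}" for t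
  proof -
    have "norm (t *\<^sub>R (y - y0)) \<le> t * (norm (y - y0) + 1)" using t by simp
    also have "\<dots> < \<delta> * (norm (y - y0) + 1)" using t norm_pos by simp
    also have "\<dots> = r" unfolding \<delta>_def using norm_pos by simp
    finally have "y0 + t *\<^sub>R (y - y0) \<in> W" using ball by (auto simp: dist_norm)
    have "\<phi> (y0 + t *\<^sub>R (y - y0)) = \<phi> y0 + t *\<^sub>R (\<phi> y - \<phi> y0)"
      by (simp add: linear_add[OF lin] linear_scale[OF lin] linear_diff[OF lin])
    then have "poly P t = p (\<phi> (y0 + t *\<^sub>R (y - y0)))" using P by simp
    also have "\<dots> = 0" using zero \<open>y0 + t *\<^sub>R (y - y0) \<in> W\<close> by blast
    finally show ?thesis .
  qed
  then have "{0<..<\<delta>} \<subseteq> {t. poly P t = 0}" by blast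
  then have "infinite {t. poly P t = 0}"
    using infinite_Ioo[OF \<open>\<delta> > 0\<close>] finite_subset by blast
  then have "P = 0" using poly_roots_finite by blast
  then show ?thesis using P[rule_format, of 1] by simp
qed

lemma zariski_closure_GL_subset_span: "zariski_closure_GL S \<subseteq> span S"
proof
  fix A assume A: "A \<in> zariski_closure_GL S"
  obtain y z where y: "y \<in> span S" and z: "\<And>w. w \<in> span S \<Longrightarrow> orthogonal z w"
    and A_eq: "A = y + z"
    using orthogonal_subspace_decomp_exists by blast
  have "\<forall>s\<in>S. s \<bullet> z = 0" using z span_superset by (auto simp: orthogonal_def inner_commute)
  then have "A \<bullet> z = 0"
    using A matrix_poly_fun_inner[of z] by (auto simp: zariski_closure_GL_def)
  moreover have "y \<bullet> z = 0" using z[OF y] by (simp add: orthogonal_def inner_commute)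
  ultimately have "z = 0" by (simp add: A_eq inner_add_left)
  then show "A \<in> span S" using y A_eq by simp
qed

lemma zariski_closure_GL_eq_span:
  fixes \<phi> :: "'a::real_normed_vector \<Rightarrow> real^'n^'n"
  assumes lin: "linear \<phi>" and span: "span S \<subseteq> range \<phi>"
    and "open W" "W \<noteq> {}" and W: "\<phi> ` W \<subseteq> closure S"
  shows "zariski_closure_GL S = span S \<inter> {A. invertible A}"
proof
  show "zariski_closure_GL S \<subseteq> span S \<inter> {A. invertible A}"
    using zariski_closure_GL_subset_span by (auto simp: zariski_closure_GL_def)
next
  show "span S \<inter> {A. invertible A} \<subseteq> zariski_closure_GL S"
  proof
    fix A assume A: "A \<in> span S \<inter> {A. invertible A}"
    have "p A = 0" if p: "p \<in> matrix_poly_fun" "\<forall>s\<in>S. p s = 0" for p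
    proof -
      have "closure S \<subseteq> p -` {0}"
        using p continuous_on_matrix_poly_fun[OF p(1)]
        by (intro closure_minimal) (auto simp: continuous_on_closed_vimage)
      then have "\<forall>y\<in>W. p (\<phi> y) = 0" using W by auto
      moreover obtain y where "A = \<phi> y" using A span by auto
      ultimately show "p A = 0"
        using matrix_poly_fun_vanishing_on_linear_image[OF p(1) lin \<open>open W\<close> \<open>W \<noteq> {}\<close>] by blast
    qed
    then show "A \<in> zariski_closure_GL S" using A by (auto simp: zariski_closure_GL_def)
  qed
qed

lemma Ck_on_const: "Ck_on k U (\<lambda>x. c)"
  by (induction k arbitrary: c) (auto intro!: exI[of _ "\<lambda>x v. 0"])

lemma c_infinity_on_linear:
  assumes "open U" and lin: "linear g" and eq: "\<forall>x\<in>U. f x = g x"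
  shows "c_infinity_on U f"
  unfolding c_infinity_on_def
proof
  fix k
  have g_eq: "g x = f x" if "x \<in> U" for x using eq that by simp
  show "Ck_on k U f"
  proof (cases k)
    case 0
    have "continuous_on U g" using lin by (simp add: linear_continuous_on linear_linear)
    then have "continuous_on U f" using g_eq by (rule continuous_on_eq)
    then show ?thesis using 0 by simp
  next
    case (Suc j)
    have "(f has_derivative g) (at x)" if "x \<in> U" for x
    proof (rule has_derivative_transform_within_open[OF _ \<open>open U\<close> that g_eq])
      show "(g has_derivative g) (at x)"
        using lin by (simp add: linear_linear bounded_linear_imp_has_derivative)
    qed
    then show ?thesis using Suc Ck_on_const by (auto intro!: exI[of _ "\<lambda>x. g"])
  qed
qed

lemma linear_matrix_vector_mul_left: "linear (\<lambda>A::real^'n^'m. A *v x)"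
  by (rule linearI) (simp_all add: matrix_vector_mult_add_rdistrib scaleR_matrix_vector_assoc)

lemma subspace_commutant: "subspace {a::real^'n^'n. a ** b = b ** a}"
proof -
  have "(a + a') ** b = a ** b + a' ** b" "b ** (c *\<^sub>R a) = c *\<^sub>R (b ** a)"
    "(c *\<^sub>R a) ** b = c *\<^sub>R (a ** b)" for a a' c
    by (simp_all add: vec_eq_iff matrix_matrix_mult_def sum_distrib_left sum.distrib algebra_simps)
  then show ?thesis by (auto simp: subspace_def matrix_add_ldistrib)
qed

lemma span_commute:
  fixes S :: "(real^'n^'n) set"
  assumes "\<forall>s\<in>S. s ** b = b ** s" and "a \<in> span S"
  shows "a ** b = b ** a"
  using assms span_minimal[OF _ subspace_commutant, of S b] by auto

lemma span_eq_UNIV_if_interior_closure: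
  fixes T :: "'a::euclidean_space set"
  assumes "interior (closure T) \<noteq> {}"
  shows "span T = UNIV"
proof -
  have "UNIV = affine hull (closure T)"
    using affine_hull_nonempty_interior[OF assms] by simp
  also have "\<dots> \<subseteq> span (closure T)" by (rule affine_hull_subset_span)
  also have "\<dots> \<subseteq> span T" by (simp add: closure_minimal span_minimal span_superset)
  finally show ?thesis by blast
qed

lemma inj_on_span_if_cyclic:
  fixes S :: "(real^'n^'n) set"
  assumes comm: "\<forall>s\<in>S. \<forall>t\<in>S. s ** t = t ** s"
    and cyclic: "span {s *v x | s. s \<in> S} = UNIV"
  shows "inj_on (\<lambda>g. g *v x) (span S)"
proof -
  have "d = 0" if d: "d \<in> span S" "d *v x = 0" for d
  proof -
    have orbit_zero: "d *v (s *v x) = 0" if "s \<in> S" for s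
    proof -
      have "d ** s = s ** d" using span_commute[of S s d] comm that d(1) by auto
      then have "d *v (s *v x) = s *v (d *v x)" by (simp add: matrix_vector_mul_assoc)
      then show ?thesis using d(2) by simp
    qed
    have "d *v v = 0" for v
      using linear_eq_0_on_span[OF matrix_vector_mul_linear, of "{s *v x | s. s \<in> S}" d v]
        cyclic orbit_zero by blast
    then show "d = 0" by (simp add: matrix_eq)
  qed
  then show ?thesis
    using linear_inj_on_iff_eq_0[OF linear_matrix_vector_mul_left subspace_span] by blast
qed

lemma linear_left_inverse_of_orbit_map:
  fixes S :: "(real^'n^'n) set" and x :: "real^'n"
  assumes comm: "\<forall>s\<in>S. \<forall>t\<in>S. s ** t = t ** s"
    and dense: "interior (closure {s *v x | s. s \<in> S}) \<noteq> {}"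
  obtains \<phi> where "linear \<phi>" "range \<phi> = span S"
    "\<forall>a\<in>span S. \<phi> (a *v x) = a" "\<forall>y. \<phi> y *v x = y"
proof -
  have cyclic: "span {s *v x | s. s \<in> S} = UNIV"
    by (rule span_eq_UNIV_if_interior_closure[OF dense])
  have lin: "linear (\<lambda>a::real^'n^'n. a *v x)" by (rule linear_matrix_vector_mul_left)
  obtain \<phi> where \<phi>: "range \<phi> \<subseteq> span S" "linear \<phi>" "\<forall>a\<in>span S. \<phi> (a *v x) = a"
    using linear_inj_on_left_inverse[OF lin inj_on_span_if_cyclic[OF comm cyclic]] by blast
  have "(\<lambda>a. a *v x) ` span S = UNIV"
    using cyclic linear_span_image[OF lin, of S] by (simp add: setcompr_eq_image)
  then have "\<phi> y *v x = y" for y using \<phi>(3) by (metis UNIV_I imageE)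
  moreover have "span S \<subseteq> range \<phi>" using \<phi>(3) by (metis rangeI subsetI)
  ultimately show ?thesis using that \<phi> by blast
qed

lemma image_closure_subset_closure_if_left_inverse:
  assumes "continuous_on UNIV \<phi>" and "\<forall>s\<in>S. \<phi> (L s) = s"
  shows "\<phi> ` closure (L ` S) \<subseteq> closure S"
proof (rule image_closure_subset)
  show "continuous_on (closure (L ` S)) \<phi>" using assms(1) continuous_on_subset by blast
  show "\<phi> ` L ` S \<subseteq> closure S" using assms(2) closure_subset by force
qed simp

lemma somewhere_dense_if_image_somewhere_dense:
  assumes "continuous_on UNIV L" and inverse: "\<forall>g\<in>G. \<phi> (L g) = g" and "S \<subseteq> G"
    and closure: "\<phi> ` closure (L ` S) \<subseteq> closure S"
    and "open W" "W \<noteq> {}" and W: "W \<subseteq> closure (L ` S)"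
  shows "\<exists>U. openin (top_of_set G) U \<and> U \<noteq> {} \<and> U \<subseteq> closure S"
proof (intro exI conjI)
  show "openin (top_of_set G) (G \<inter> L -` W)"
    using open_vimage[OF \<open>open W\<close> assms(1)] by blast
  have "W \<inter> L ` S \<noteq> {}"
    using W \<open>W \<noteq> {}\<close> open_Int_closure_eq_empty[OF \<open>open W\<close>, of "L ` S"] by blast
  then show "G \<inter> L -` W \<noteq> {}" using \<open>S \<subseteq> G\<close> by blast
  show "G \<inter> L -` W \<subseteq> closure S"
  proof
    fix g assume "g \<in> G \<inter> L -` W"
    then have "g = \<phi> (L g)" and "L g \<in> closure (L ` S)" using inverse W by auto
    then show "g \<in> closure S" using closure by blast
  qed
qed

lemma image_Int_eq_vimage_if_inverse:
  assumes "range \<phi> = V" and "\<forall>a\<in>V. \<phi> (L a) = a" and "\<forall>y. L (\<phi> y) = y"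
  shows "L ` (V \<inter> P) = \<phi> -` P"
proof
  show "L ` (V \<inter> P) \<subseteq> \<phi> -` P" using assms(2) by auto
  show "\<phi> -` P \<subseteq> L ` (V \<inter> P)"
  proof
    fix y assume "y \<in> \<phi> -` P"
    then have "\<phi> y \<in> V \<inter> P" using assms(1) by auto
    then show "y \<in> L ` (V \<inter> P)" using assms(3) by (metis image_eqI)
  qed
qed

theorem proposition3p2:
  fixes S :: "(real^'n^'n) set" and x :: "real^'n"
  assumes S_GL: "\<forall>s\<in>S. invertible s"
    and S_semigroup: "\<forall>s\<in>S. \<forall>t\<in>S. s ** t \<in> S"
    and S_comm: "\<forall>s\<in>S. \<forall>t\<in>S. s ** t = t ** s"
    and dense: "interior (closure {s *v x | s. s \<in> S}) \<noteq> {}"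
  shows "inj_on (\<lambda>g. g *v x) (zariski_closure_GL S)
       \<and> open ((\<lambda>g. g *v x) ` zariski_closure_GL S)
       \<and> c_infinity_on ((\<lambda>g. g *v x) ` zariski_closure_GL S)
                       (the_inv_into (zariski_closure_GL S) (\<lambda>g. g *v x))
       \<and> (\<exists>U. openin (top_of_set (zariski_closure_GL S)) U \<and> U \<noteq> {} \<and> U \<subseteq> closure S)"
proof -
  define L where "L = (\<lambda>g::real^'n^'n. g *v x)"
  define G where "G = zariski_closure_GL S"
  define W where "W = interior (closure (L ` S))"
  obtain \<phi> where "linear \<phi>" and \<phi>: "range \<phi> = span S" "\<forall>a\<in>span S. \<phi> (L a) = a" "\<forall>y. L (\<phi> y) = y"
    using linear_left_inverse_of_orbit_map[OF S_comm dense] unfolding L_def by blast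
  have "linear L" unfolding L_def by (rule linear_matrix_vector_mul_left)
  then have cont: "continuous_on UNIV L" "continuous_on UNIV \<phi>"
    using \<open>linear \<phi>\<close> by (simp_all add: linear_continuous_on linear_linear)
  have W: "open W" "W \<noteq> {}" "W \<subseteq> closure (L ` S)"
    using dense interior_subset by (auto simp: W_def L_def setcompr_eq_image)
  have closure: "\<phi> ` closure (L ` S) \<subseteq> closure S"
    using image_closure_subset_closure_if_left_inverse[OF cont(2)] \<phi>(2) span_base by blast
  have G: "G = span S \<inter> {A. invertible A}"
    unfolding G_def using \<phi>(1) image_mono[OF W(3), of \<phi>] closure
    by (intro zariski_closure_GL_eq_span[OF \<open>linear \<phi>\<close> _ W(1,2)]) auto
  have inverse: "\<forall>g\<in>G. \<phi> (L g) = g" using G \<phi>(2) by blast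
  then have inj: "inj_on L G" by (metis inj_on_inverseI)
  have "open (L ` G)"
    using G image_Int_eq_vimage_if_inverse[OF \<phi>] open_vimage[OF open_invertible_matrices cont(2)]
    by simp
  moreover have "c_infinity_on (L ` G) (the_inv_into G L)"
    using \<open>open (L ` G)\<close> \<open>linear \<phi>\<close> inverse inj
    by (intro c_infinity_on_linear) (auto intro: the_inv_into_f_eq)
  moreover have "\<exists>U. openin (top_of_set G) U \<and> U \<noteq> {} \<and> U \<subseteq> closure S"
  proof (rule somewhere_dense_if_image_somewhere_dense[OF cont(1) inverse _ closure W])
    show "S \<subseteq> G" using S_GL by (auto simp: G_def zariski_closure_GL_def)
  qed
  ultimately show ?thesis using inj by (simp only: L_def G_def)
qed

end
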